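(* Let $R$ be a commutative ring and $S$ a multiplicative subset of $R$ satisfying the maximal multiple condition. Then the following are equivalent: (1) $R$ is a uniformly $S$-Noetherian ring; (2) $R$ is an $S$-Noetherian ring; (3) the localization $R_S$ is a Noetherian ring.
   Context: Rings are commutative with identity. $S$ satisfies the maximal multiple condition if there is $s\in S$ such that every $t\in S$ divides $s$ in $R$. $R$ is $S$-Noetherian if for every ideal $I$ there are a finitely generated ideal $K\subseteq I$ and $s\in S$ (possibly depending on $I$) with $sI\subseteq K$. $R$ is uniformly $S$-Noetherian if there is a single $s\in S$ such that for every ideal $I$ there is a finitely generated ideal $K\subseteq I$ with $sI\subseteq K$. *)

theory Defs
  imports "HOL-Algebra.Ring_Divisibility"
begin

definition mult_subset :: "('a, 'b) ring_scheme \<Rightarrow> 'a set \<Rightarrow> bool" where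
  "mult_subset R S \<longleftrightarrow> S \<subseteq> carrier R \<and> \<one>\<^bsub>R\<^esub> \<in> S \<and>
     (\<forall>s\<in>S. \<forall>t\<in>S. s \<otimes>\<^bsub>R\<^esub> t \<in> S)"

definition maximal_multiple :: "('a, 'b) ring_scheme \<Rightarrow> 'a set \<Rightarrow> bool" where
  "maximal_multiple R S \<longleftrightarrow> (\<exists>s\<in>S. \<forall>t\<in>S. t divides\<^bsub>R\<^esub> s)"

definition fin_gen_ideal :: "('a, 'b) ring_scheme \<Rightarrow> 'a set \<Rightarrow> bool" where
  "fin_gen_ideal R K \<longleftrightarrow> (\<exists>A \<subseteq> carrier R. finite A \<and> K = Idl\<^bsub>R\<^esub> A)"

definition S_noetherian :: "('a, 'b) ring_scheme \<Rightarrow> 'a set \<Rightarrow> bool" where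
  "S_noetherian R S \<longleftrightarrow> (\<forall>I. ideal I R \<longrightarrow>
     (\<exists>K s. fin_gen_ideal R K \<and> K \<subseteq> I \<and> s \<in> S \<and> (\<lambda>x. s \<otimes>\<^bsub>R\<^esub> x) ` I \<subseteq> K))"

definition uniformly_S_noetherian :: "('a, 'b) ring_scheme \<Rightarrow> 'a set \<Rightarrow> bool" where
  "uniformly_S_noetherian R S \<longleftrightarrow> (\<exists>s\<in>S. \<forall>I. ideal I R \<longrightarrow>
     (\<exists>K. fin_gen_ideal R K \<and> K \<subseteq> I \<and> (\<lambda>x. s \<otimes>\<^bsub>R\<^esub> x) ` I \<subseteq> K))"

definition loc_rel :: "('a, 'b) ring_scheme \<Rightarrow> 'a set \<Rightarrow> (('a \<times> 'a) \<times> ('a \<times> 'a)) set" where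
  "loc_rel R S = {((r, s), (r', s')). r \<in> carrier R \<and> s \<in> S \<and> r' \<in> carrier R \<and> s' \<in> S \<and>
     (\<exists>u\<in>S. u \<otimes>\<^bsub>R\<^esub> (r \<otimes>\<^bsub>R\<^esub> s' \<ominus>\<^bsub>R\<^esub> r' \<otimes>\<^bsub>R\<^esub> s) = \<zero>\<^bsub>R\<^esub>)}"

definition localization :: "('a, 'b) ring_scheme \<Rightarrow> 'a set \<Rightarrow> ('a \<times> 'a) set ring" where
  "localization R S = \<lparr>
     carrier = (carrier R \<times> S) // loc_rel R S,
     mult = (\<lambda>P Q. \<Union>{loc_rel R S `` {(fst a \<otimes>\<^bsub>R\<^esub> fst b, snd a \<otimes>\<^bsub>R\<^esub> snd b)} | a b. a \<in> P \<and> b \<in> Q}),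
     one = loc_rel R S `` {(\<one>\<^bsub>R\<^esub>, \<one>\<^bsub>R\<^esub>)},
     zero = loc_rel R S `` {(\<zero>\<^bsub>R\<^esub>, \<one>\<^bsub>R\<^esub>)},
     add = (\<lambda>P Q. \<Union>{loc_rel R S `` {(fst a \<otimes>\<^bsub>R\<^esub> snd b \<oplus>\<^bsub>R\<^esub> fst b \<otimes>\<^bsub>R\<^esub> snd a, snd a \<otimes>\<^bsub>R\<^esub> snd b)} | a b. a \<in> P \<and> b \<in> Q}) \<rparr>"

end

theory Submission
  imports Defs
begin

text \<open>Let s0 be a common multiple of S. For t in S the product s0 t lies in S and hence
divides s0, so t is invertible modulo the annihilator of s0, and s0 is a universal witness in
the relation defining the localization: r/t = r'/t' iff s0 r t' = s0 r' t. Consequently the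
canonical map R \<rightarrow> R_S is surjective and identifies x/1 with y/1 iff s0 x = s0 y.
If R is S-Noetherian, an ideal of R_S is generated by the image of a finite set K with
s J \<subseteq> K \<subseteq> J for its preimage J, because s becomes a unit in R_S. Conversely, if R_S is
Noetherian, the image of an ideal I is generated by the images of a finite A \<subseteq> I; then
x/1 \<in> (A) R_S yields s0 x \<in> (A), so the single element s0 works for all ideals.\<close>

lemma (in cring) mult_minus_eq_zero_iff:
  assumes "c \<in> carrier R" "a \<in> carrier R" "b \<in> carrier R"
  shows "c \<otimes> (a \<ominus> b) = \<zero> \<longleftrightarrow> c \<otimes> a = c \<otimes> b"
proof -
  have "c \<otimes> a = c \<otimes> b \<oplus> c \<otimes> (a \<ominus> b)" "c \<otimes> (a \<ominus> b) = c \<otimes> a \<ominus> c \<otimes> b"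
    using assms by algebra+
  then show ?thesis using assms by (auto simp: minus_eq)
qed

lemma (in cring) surj_ring_hom_imp_cring:
  assumes h: "h \<in> ring_hom R S" and surj: "h ` carrier R = carrier S" and zero: "h \<zero> = \<zero>\<^bsub>S\<^esub>"
  shows "cring S"
proof -
  have "ring (S\<lparr>carrier := h ` carrier R, zero := h \<zero>\<rparr>)"
    using ring_hom_imp_img_ring[OF h] .
  then interpret S: ring S by (simp only: surj zero) simp
  show ?thesis
  proof unfold_locales
    fix x y assume "x \<in> carrier S" "y \<in> carrier S"
    then obtain a b where "a \<in> carrier R" "b \<in> carrier R" "x = h a" "y = h b"
      unfolding surj[symmetric] by blast
    then show "x \<otimes>\<^bsub>S\<^esub> y = y \<otimes>\<^bsub>S\<^esub> x"
      using ring_hom_mult[OF h, of a b] ring_hom_mult[OF h, of b a] m_comm[of a b] by simp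
  qed
qed

lemma (in ring_hom_ring) surj_img_ideal:
  assumes surj: "h ` carrier R = carrier S" and I: "ideal I R"
  shows "ideal (h ` I) S"
proof (rule idealI[OF S.ring_axioms])
  interpret I: ideal I R by fact
  show "subgroup (h ` I) (add_monoid S)"
    by (rule img_is_add_subgroup[OF I.a_subgroup])
  show "x \<otimes>\<^bsub>S\<^esub> y \<in> h ` I" "y \<otimes>\<^bsub>S\<^esub> x \<in> h ` I" if x: "x \<in> h ` I" and y: "y \<in> carrier S" for x y
  proof -
    obtain a where a: "a \<in> I" "x = h a" using x by (rule imageE)
    obtain b where b: "b \<in> carrier R" "y = h b" using y by (auto simp flip: surj)
    have "a \<in> carrier R" using a(1) I.Icarr by blast
    then show "x \<otimes>\<^bsub>S\<^esub> y \<in> h ` I" "y \<otimes>\<^bsub>S\<^esub> x \<in> h ` I"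
      using a b imageI[OF I.I_r_closed[OF a(1) b(1)], of h] imageI[OF I.I_l_closed[OF a(1) b(1)], of h]
      by simp_all
  qed
qed

lemma (in ring_hom_ring) surj_img_genideal:
  assumes surj: "h ` carrier R = carrier S" and A: "A \<subseteq> carrier R"
  shows "h ` (Idl A) = Idl\<^bsub>S\<^esub> (h ` A)"
proof
  have hA: "h ` A \<subseteq> carrier S" using A by auto
  have "ideal {r \<in> carrier R. h r \<in> Idl\<^bsub>S\<^esub> (h ` A)} R"
    by (rule ideal_vimage[OF S.genideal_ideal[OF hA]])
  moreover have "A \<subseteq> {r \<in> carrier R. h r \<in> Idl\<^bsub>S\<^esub> (h ` A)}"
    using A S.genideal_self[OF hA] by auto
  ultimately have "Idl A \<subseteq> {r \<in> carrier R. h r \<in> Idl\<^bsub>S\<^esub> (h ` A)}"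
    by (rule R.genideal_minimal)
  then show "h ` (Idl A) \<subseteq> Idl\<^bsub>S\<^esub> (h ` A)" by blast
  have "h ` A \<subseteq> h ` (Idl A)" using R.genideal_self[OF A] by (rule image_mono)
  then show "Idl\<^bsub>S\<^esub> (h ` A) \<subseteq> h ` (Idl A)"
    by (rule S.genideal_minimal[OF surj_img_ideal[OF surj R.genideal_ideal[OF A]]])
qed

lemma (in ring_hom_ring) S_noetherian_imp_noetherian_img:
  assumes surj: "h ` carrier R = carrier S" and T: "T \<subseteq> carrier R"
    and units: "\<And>t. t \<in> T \<Longrightarrow> h t \<in> Units S" and SN: "S_noetherian R T"
  shows "noetherian_ring S"
proof (rule S.noetherian_ringI)
  fix I assume I: "ideal I S"
  let ?J = "{r \<in> carrier R. h r \<in> I}"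
  obtain K t where K: "fin_gen_ideal R K" "K \<subseteq> ?J" "t \<in> T" "(\<lambda>x. t \<otimes> x) ` ?J \<subseteq> K"
    using SN ideal_vimage[OF I] unfolding S_noetherian_def by blast
  obtain A where A: "A \<subseteq> carrier R" "finite A" "K = Idl A"
    using K(1) unfolding fin_gen_ideal_def by blast
  have hA: "h ` A \<subseteq> carrier S" using A(1) by auto
  have "I = Idl\<^bsub>S\<^esub> (h ` A)"
  proof
    show "Idl\<^bsub>S\<^esub> (h ` A) \<subseteq> I"
      using K(2) R.genideal_self[OF A(1)] A(3) by (intro S.genideal_minimal[OF I]) auto
    show "I \<subseteq> Idl\<^bsub>S\<^esub> (h ` A)"
    proof
      fix y assume y: "y \<in> I"
      then obtain r where r: "r \<in> carrier R" "y = h r"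
        using ideal.Icarr[OF I] by (auto simp flip: surj)
      have tC: "t \<in> carrier R" and ht: "h t \<in> Units S" using K(3) T units by auto
      have "h (t \<otimes> r) \<in> Idl\<^bsub>S\<^esub> (h ` A)"
        using K(4) r y A surj_img_genideal[OF surj A(1)] by blast
      then have "h t \<otimes>\<^bsub>S\<^esub> y \<in> Idl\<^bsub>S\<^esub> (h ` A)" using tC r by simp
      then have "inv\<^bsub>S\<^esub> (h t) \<otimes>\<^bsub>S\<^esub> (h t \<otimes>\<^bsub>S\<^esub> y) \<in> Idl\<^bsub>S\<^esub> (h ` A)"
        by (rule ideal.I_l_closed[OF S.genideal_ideal[OF hA] _ S.Units_inv_closed[OF ht]])
      then show "y \<in> Idl\<^bsub>S\<^esub> (h ` A)"
        using r ht S.Units_closed[OF ht] by (simp add: S.m_assoc[symmetric])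
    qed
  qed
  then show "\<exists>B \<subseteq> carrier S. finite B \<and> I = Idl\<^bsub>S\<^esub> B"
    using hA A(2) by blast
qed

lemma (in ring_hom_ring) noetherian_img_imp_fin_gen_multiple:
  assumes surj: "h ` carrier R = carrier S" and N: "noetherian_ring S" and s: "s \<in> carrier R"
    and ker: "\<And>x y. \<lbrakk>x \<in> carrier R; y \<in> carrier R; h x = h y\<rbrakk> \<Longrightarrow> s \<otimes> x = s \<otimes> y"
    and I: "ideal I R"
  shows "\<exists>K. fin_gen_ideal R K \<and> K \<subseteq> I \<and> (\<lambda>x. s \<otimes> x) ` I \<subseteq> K"
proof -
  obtain B where B: "B \<subseteq> carrier S" "finite B" "h ` I = Idl\<^bsub>S\<^esub> B"
    using noetherian_ring.finetely_gen[OF N surj_img_ideal[OF surj I]] by blast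
  have "B \<subseteq> h ` I" using S.genideal_self[OF B(1)] B(3) by simp
  then obtain A where A: "A \<subseteq> I" "finite A" "B = h ` A"
    using finite_subset_image[OF B(2)] by blast
  have AC: "A \<subseteq> carrier R" using A(1) ideal.Icarr[OF I] by blast
  have img: "h ` I = h ` (Idl A)" using B(3) A(3) surj_img_genideal[OF surj AC] by simp
  have "s \<otimes> x \<in> Idl A" if x: "x \<in> I" for x
  proof -
    obtain y where y: "y \<in> Idl A" "h x = h y" using img x by (metis imageE imageI)
    have "y \<in> carrier R" using ideal.Icarr[OF R.genideal_ideal[OF AC] y(1)] .
    then have "s \<otimes> x = s \<otimes> y" using ker ideal.Icarr[OF I x] y(2) by blast
    then show ?thesis using ideal.I_l_closed[OF R.genideal_ideal[OF AC] y(1) s] by simp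
  qed
  moreover have "fin_gen_ideal R (Idl A)" using AC A(2) unfolding fin_gen_ideal_def by blast
  moreover have "Idl A \<subseteq> I" using R.genideal_minimal[OF I A(1)] .
  ultimately show ?thesis by blast
qed

locale maximal_multiple_subset = cring R for R (structure) +
  fixes S :: "'a set" and s0 :: 'a
  assumes mult_subset: "mult_subset R S"
    and s0_in_S: "s0 \<in> S" and divides_s0: "\<And>t. t \<in> S \<Longrightarrow> t divides s0"
begin

abbreviation L where "L \<equiv> localization R S"

definition loc_map :: "'a \<Rightarrow> ('a \<times> 'a) set"
  where "loc_map r = loc_rel R S `` {(r, \<one>)}"

lemma S_carrier: "S \<subseteq> carrier R" and one_in_S: "\<one> \<in> S"
  and mult_in_S: "s \<in> S \<Longrightarrow> t \<in> S \<Longrightarrow> s \<otimes> t \<in> S"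
  using mult_subset unfolding mult_subset_def by auto

lemma s0_carrier: "s0 \<in> carrier R"
  using s0_in_S S_carrier by blast

lemma S_invertible_on_s0:
  assumes "t \<in> S"
  obtains c where "c \<in> carrier R" "s0 \<otimes> t \<otimes> c = s0"
  using divides_s0[OF mult_in_S[OF s0_in_S assms]] unfolding factor_def by auto

lemma s0_mult_cancel:
  assumes t: "t \<in> S" and x: "x \<in> carrier R" and y: "y \<in> carrier R"
    and eq: "s0 \<otimes> t \<otimes> x = s0 \<otimes> t \<otimes> y"
  shows "s0 \<otimes> x = s0 \<otimes> y"
proof -
  obtain c where c: "c \<in> carrier R" "s0 \<otimes> t \<otimes> c = s0" using S_invertible_on_s0[OF t] .
  have tC: "t \<in> carrier R" using t S_carrier by blast
  have "s0 \<otimes> x = (s0 \<otimes> t \<otimes> c) \<otimes> x" by (simp only: c(2))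
  also have "\<dots> = c \<otimes> (s0 \<otimes> t \<otimes> x)" using c(1) tC x s0_carrier by (simp add: m_ac)
  also have "\<dots> = c \<otimes> (s0 \<otimes> t \<otimes> y)" by (simp only: eq)
  also have "\<dots> = (s0 \<otimes> t \<otimes> c) \<otimes> y" using c(1) tC y s0_carrier by (simp add: m_ac)
  also have "\<dots> = s0 \<otimes> y" by (simp only: c(2))
  finally show ?thesis .
qed

lemma S_annihilates_diff_iff:
  assumes a: "a \<in> carrier R" and b: "b \<in> carrier R"
  shows "(\<exists>u\<in>S. u \<otimes> (a \<ominus> b) = \<zero>) \<longleftrightarrow> s0 \<otimes> a = s0 \<otimes> b"
proof
  assume "\<exists>u\<in>S. u \<otimes> (a \<ominus> b) = \<zero>"
  then obtain u where u: "u \<in> S" "u \<otimes> (a \<ominus> b) = \<zero>" by blast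
  obtain c where c: "c \<in> carrier R" "s0 = u \<otimes> c"
    using divides_s0[OF u(1)] unfolding factor_def by blast
  have "s0 \<otimes> (a \<ominus> b) = c \<otimes> (u \<otimes> (a \<ominus> b))"
    using a b c u(1) S_carrier by (auto simp: m_ac)
  then show "s0 \<otimes> a = s0 \<otimes> b"
    using a b u(2) c(1) s0_carrier mult_minus_eq_zero_iff by auto
qed (use a b s0_in_S s0_carrier mult_minus_eq_zero_iff in blast)

lemma loc_rel_iff:
  "((r, t), (r', t')) \<in> loc_rel R S \<longleftrightarrow>
     r \<in> carrier R \<and> t \<in> S \<and> r' \<in> carrier R \<and> t' \<in> S \<and> s0 \<otimes> r \<otimes> t' = s0 \<otimes> r' \<otimes> t"
proof (cases "r \<in> carrier R \<and> t \<in> S \<and> r' \<in> carrier R \<and> t' \<in> S")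
  case True
  then have "t \<in> carrier R" "t' \<in> carrier R" using S_carrier by auto
  then show ?thesis
    using True S_annihilates_diff_iff[of "r \<otimes> t'" "r' \<otimes> t"] s0_carrier
    unfolding loc_rel_def by (auto simp: m_assoc)
qed (auto simp: loc_rel_def)

lemma loc_rel_equiv: "equiv (carrier R \<times> S) (loc_rel R S)"
proof (rule equivI)
  show "refl_on (carrier R \<times> S) (loc_rel R S)"
    unfolding refl_on_def by (auto simp: loc_rel_iff)
  show "sym (loc_rel R S)"
    unfolding sym_def by (auto simp: loc_rel_iff)
  show "trans (loc_rel R S)"
  proof (rule transI)
    fix x y z assume "(x, y) \<in> loc_rel R S" "(y, z) \<in> loc_rel R S"
    moreover obtain r t r' t' r'' t'' where "x = (r, t)" "y = (r', t')" "z = (r'', t'')"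
      by (metis surj_pair)
    ultimately have h: "r \<in> carrier R" "t \<in> S" "r' \<in> carrier R" "t' \<in> S" "r'' \<in> carrier R" "t'' \<in> S"
      and e1: "s0 \<otimes> r \<otimes> t' = s0 \<otimes> r' \<otimes> t" and e2: "s0 \<otimes> r' \<otimes> t'' = s0 \<otimes> r'' \<otimes> t'"
      and xz: "x = (r, t)" "z = (r'', t'')"
      by (auto simp: loc_rel_iff)
    have C: "t \<in> carrier R" "t' \<in> carrier R" "t'' \<in> carrier R" using h S_carrier by auto
    have "s0 \<otimes> t' \<otimes> (r \<otimes> t'') = (s0 \<otimes> r \<otimes> t') \<otimes> t''" using h C s0_carrier by (simp add: m_ac)
    also have "\<dots> = (s0 \<otimes> r' \<otimes> t'') \<otimes> t" using h C s0_carrier by (simp only: e1) (simp add: m_ac)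
    also have "\<dots> = s0 \<otimes> t' \<otimes> (r'' \<otimes> t)" using h C s0_carrier by (simp only: e2) (simp add: m_ac)
    finally have "s0 \<otimes> (r \<otimes> t'') = s0 \<otimes> (r'' \<otimes> t)"
      using h C by (intro s0_mult_cancel[OF h(4)]) auto
    then show "(x, z) \<in> loc_rel R S" using h C s0_carrier by (simp add: xz loc_rel_iff m_assoc)
  qed
qed (auto simp: loc_rel_def)

lemma mem_loc_map_iff:
  assumes "x \<in> carrier R"
  shows "(r, t) \<in> loc_map x \<longleftrightarrow> r \<in> carrier R \<and> t \<in> S \<and> s0 \<otimes> x \<otimes> t = s0 \<otimes> r"
  using assms s0_carrier unfolding loc_map_def by (auto simp: loc_rel_iff one_in_S)

lemma loc_map_eq_iff:
  assumes "x \<in> carrier R" "y \<in> carrier R"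
  shows "loc_map x = loc_map y \<longleftrightarrow> s0 \<otimes> x = s0 \<otimes> y"
  using assms s0_carrier eq_equiv_class_iff[OF loc_rel_equiv, of "(x, \<one>)" "(y, \<one>)"]
  unfolding loc_map_def by (auto simp: loc_rel_iff one_in_S)

lemma loc_map_class:
  assumes "p \<in> loc_map x"
  shows "loc_rel R S `` {p} = loc_map x"
  using equiv_class_eq[OF loc_rel_equiv] assms unfolding loc_map_def by auto

lemma loc_map_surj: "loc_map ` carrier R = carrier L"
proof
  show "loc_map ` carrier R \<subseteq> carrier L"
    unfolding loc_map_def localization_def by (auto intro: quotientI simp: one_in_S)
  show "carrier L \<subseteq> loc_map ` carrier R"
  proof
    fix P assume "P \<in> carrier L"
    then obtain r t where rt: "r \<in> carrier R" "t \<in> S" "P = loc_rel R S `` {(r, t)}"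
      unfolding localization_def by (auto elim: quotientE)
    obtain c where c: "c \<in> carrier R" "s0 \<otimes> t \<otimes> c = s0" using S_invertible_on_s0[OF rt(2)] .
    have "s0 \<otimes> (r \<otimes> c) \<otimes> t = (s0 \<otimes> t \<otimes> c) \<otimes> r"
      using rt c(1) S_carrier s0_carrier by (auto simp: m_ac)
    then have "(r, t) \<in> loc_map (r \<otimes> c)"
      using rt c by (simp add: mem_loc_map_iff)
    then show "P \<in> loc_map ` carrier R"
      using rt c(1) loc_map_class by auto
  qed
qed

lemma loc_map_self: "x \<in> carrier R \<Longrightarrow> (x, \<one>) \<in> loc_map x"
  using s0_carrier by (simp add: mem_loc_map_iff one_in_S)

lemma Union_loc_map_classes:
  assumes "x \<in> carrier R" "y \<in> carrier R"
    and "\<And>a b. a \<in> loc_map x \<Longrightarrow> b \<in> loc_map y \<Longrightarrow> f a b \<in> loc_map z"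
  shows "\<Union>{loc_rel R S `` {f a b} | a b. a \<in> loc_map x \<and> b \<in> loc_map y} = loc_map z"
proof -
  have "{loc_rel R S `` {f a b} | a b. a \<in> loc_map x \<and> b \<in> loc_map y} = {loc_map z}"
    using assms loc_map_self loc_map_class by blast
  then show ?thesis by simp
qed

lemma loc_map_mult:
  assumes x: "x \<in> carrier R" and y: "y \<in> carrier R"
  shows "loc_map x \<otimes>\<^bsub>L\<^esub> loc_map y = loc_map (x \<otimes> y)"
proof -
  have "(fst a \<otimes> fst b, snd a \<otimes> snd b) \<in> loc_map (x \<otimes> y)"
    if "a \<in> loc_map x" "b \<in> loc_map y" for a b
  proof -
    obtain r t r' t' where ab: "a = (r, t)" "b = (r', t')" by (metis surj_pair)
    then have h: "r \<in> carrier R" "t \<in> carrier R" "t \<in> S" "r' \<in> carrier R" "t' \<in> carrier R" "t' \<in> S"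
      and ex: "s0 \<otimes> x \<otimes> t = s0 \<otimes> r" and ey: "s0 \<otimes> y \<otimes> t' = s0 \<otimes> r'"
      using that x y S_carrier by (auto simp: mem_loc_map_iff)
    have "s0 \<otimes> (x \<otimes> y) \<otimes> (t \<otimes> t') = (s0 \<otimes> x \<otimes> t) \<otimes> y \<otimes> t'"
      using h x y s0_carrier by (simp add: m_ac)
    also have "\<dots> = (s0 \<otimes> y \<otimes> t') \<otimes> r"
      using h x y s0_carrier by (simp only: ex) (simp add: m_ac)
    also have "\<dots> = s0 \<otimes> (r \<otimes> r')"
      using h x y s0_carrier by (simp only: ey) (simp add: m_ac)
    finally show ?thesis
      using h x y ab by (simp add: mem_loc_map_iff mult_in_S)
  qed
  then show ?thesis
    unfolding localization_def monoid.select_convs ring.select_convs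
    by (rule Union_loc_map_classes[OF x y])
qed

lemma loc_map_add:
  assumes x: "x \<in> carrier R" and y: "y \<in> carrier R"
  shows "loc_map x \<oplus>\<^bsub>L\<^esub> loc_map y = loc_map (x \<oplus> y)"
proof -
  have "(fst a \<otimes> snd b \<oplus> fst b \<otimes> snd a, snd a \<otimes> snd b) \<in> loc_map (x \<oplus> y)"
    if "a \<in> loc_map x" "b \<in> loc_map y" for a b
  proof -
    obtain r t r' t' where ab: "a = (r, t)" "b = (r', t')" by (metis surj_pair)
    then have h: "r \<in> carrier R" "t \<in> carrier R" "t \<in> S" "r' \<in> carrier R" "t' \<in> carrier R" "t' \<in> S"
      and ex: "s0 \<otimes> x \<otimes> t = s0 \<otimes> r" and ey: "s0 \<otimes> y \<otimes> t' = s0 \<otimes> r'"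
      using that x y S_carrier by (auto simp: mem_loc_map_iff)
    have "s0 \<otimes> (x \<oplus> y) \<otimes> (t \<otimes> t') = (s0 \<otimes> x \<otimes> t) \<otimes> t' \<oplus> (s0 \<otimes> y \<otimes> t') \<otimes> t"
      using h x y s0_carrier by (simp add: m_ac r_distr l_distr)
    also have "\<dots> = s0 \<otimes> (r \<otimes> t' \<oplus> r' \<otimes> t)"
      using h x y s0_carrier by (simp only: ex ey) (simp add: m_ac r_distr)
    finally show ?thesis
      using h x y ab by (simp add: mem_loc_map_iff mult_in_S)
  qed
  then show ?thesis
    unfolding localization_def monoid.select_convs ring.select_convs
    by (rule Union_loc_map_classes[OF x y])
qed

lemma loc_map_one: "loc_map \<one> = \<one>\<^bsub>L\<^esub>" and loc_map_zero: "loc_map \<zero> = \<zero>\<^bsub>L\<^esub>"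
  unfolding localization_def loc_map_def by simp_all

lemma loc_map_ring_hom: "loc_map \<in> ring_hom R L"
  using loc_map_surj by (intro ring_hom_memI) (auto simp: loc_map_mult loc_map_add loc_map_one)

lemma localization_cring: "cring L"
  by (rule surj_ring_hom_imp_cring[OF loc_map_ring_hom loc_map_surj loc_map_zero])

lemma loc_map_ring_hom_ring: "ring_hom_ring R L loc_map"
  using localization_cring loc_map_ring_hom
  by (intro ring_hom_ringI2 ring_axioms) (auto dest: cring.axioms(1))

lemma loc_map_S_Units:
  assumes t: "t \<in> S"
  shows "loc_map t \<in> Units L"
proof -
  interpret L: cring L by (rule localization_cring)
  obtain c where c: "c \<in> carrier R" "s0 \<otimes> t \<otimes> c = s0" using S_invertible_on_s0[OF t] .
  have tC: "t \<in> carrier R" using t S_carrier by blast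
  have "s0 \<otimes> (t \<otimes> c) = s0 \<otimes> \<one>"
    using c tC s0_carrier by (simp add: m_assoc[symmetric])
  then have "loc_map t \<otimes>\<^bsub>L\<^esub> loc_map c = \<one>\<^bsub>L\<^esub>"
    using c(1) tC by (simp add: loc_map_mult loc_map_eq_iff flip: loc_map_one)
  moreover have "loc_map t \<in> carrier L" "loc_map c \<in> carrier L"
    using c(1) tC loc_map_surj by auto
  ultimately show ?thesis
    unfolding Units_def using L.m_comm by auto
qed

end

theorem proposition2p5:
  fixes R (structure) and S :: "'a set"
  assumes "cring R" and "mult_subset R S" and "maximal_multiple R S"
  shows "(uniformly_S_noetherian R S \<longleftrightarrow> S_noetherian R S) \<and>
         (S_noetherian R S \<longleftrightarrow> noetherian_ring (localization R S))"
proof -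
  obtain s0 where "s0 \<in> S" "\<forall>t\<in>S. t divides s0"
    using assms(3) unfolding maximal_multiple_def by blast
  then interpret maximal_multiple_subset R S s0
    using assms(1,2) by (simp add: maximal_multiple_subset_def maximal_multiple_subset_axioms_def)
  interpret loc_map: ring_hom_ring R L loc_map by (rule loc_map_ring_hom_ring)
  have "uniformly_S_noetherian R S \<Longrightarrow> S_noetherian R S"
    unfolding uniformly_S_noetherian_def S_noetherian_def by blast
  moreover have "S_noetherian R S \<Longrightarrow> noetherian_ring L"
    by (rule loc_map.S_noetherian_imp_noetherian_img[OF loc_map_surj S_carrier loc_map_S_Units])
  moreover have "uniformly_S_noetherian R S" if "noetherian_ring L"
    unfolding uniformly_S_noetherian_def
  proof (intro bexI allI impI)
    fix I assume I: "ideal I R"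
    show "\<exists>K. fin_gen_ideal R K \<and> K \<subseteq> I \<and> (\<lambda>x. s0 \<otimes> x) ` I \<subseteq> K"
      by (rule loc_map.noetherian_img_imp_fin_gen_multiple[OF loc_map_surj that s0_carrier _ I])
        (simp add: loc_map_eq_iff)
  qed (rule s0_in_S)
  ultimately show ?thesis by blast
qed

end
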